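(* Let $(X,d)$ be an ultrametric space such that for some $\varepsilon>0$ all balls of radius $\varepsilon$ are compact, and let $f:X\to X$ be an invertible uniformly continuous map. (i) If $f^{-1}$ is an eventually $1$-Lipschitz map, then $f$ has the shadowing property. (ii) If $f^{-1}$ is uniformly continuous and $f$ is an eventual similarity, then $f$ has the shadowing property.
   Context: An ultrametric space satisfies $d(x,z)\le\max\{d(x,y),d(y,z)\}$. A map $g$ is eventually Lipschitz $L$ if there is $\varepsilon>0$ with $d(g(x),g(y))\le L\,d(x,y)$ whenever $d(x,y)<\varepsilon$. $f$ is an eventual similarity if there are $\varepsilon>0$ and $s>0$ with $d(f(x),f(y))=s\,d(x,y)$ whenever $d(x,y)<\varepsilon$. Shadowing property: for every $\varepsilon>0$ there is $\delta>0$ such that every sequence $(x_n)_{n\in\mathbb{N}}$ with $d(f(x_n),x_{n+1})<\delta$ for all $n$ admits $x$ with $d(f^n(x),x_n)<\varepsilon$ for all $n$. *)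

theory Defs
  imports "HOL-Analysis.Analysis"
begin

definition ultrametric :: "('a::metric_space) itself \<Rightarrow> bool" where
  "ultrametric _ \<longleftrightarrow> (\<forall>x y z::'a. dist x z \<le> max (dist x y) (dist y z))"

definition eventually_lipschitz :: "('a::metric_space \<Rightarrow> 'b::metric_space) \<Rightarrow> real \<Rightarrow> bool" where
  "eventually_lipschitz g L \<longleftrightarrow>
     (\<exists>\<epsilon>>0. \<forall>x y. dist x y < \<epsilon> \<longrightarrow> dist (g x) (g y) \<le> L * dist x y)"

definition eventual_similarity :: "('a::metric_space \<Rightarrow> 'b::metric_space) \<Rightarrow> bool" where
  "eventual_similarity f \<longleftrightarrow>
     (\<exists>\<epsilon>>0. \<exists>s>0. \<forall>x y. dist x y < \<epsilon> \<longrightarrow> dist (f x) (f y) = s * dist x y)"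

definition shadowing :: "('a::metric_space \<Rightarrow> 'a) \<Rightarrow> bool" where
  "shadowing f \<longleftrightarrow>
     (\<forall>\<epsilon>>0. \<exists>\<delta>>0. \<forall>xs :: nat \<Rightarrow> 'a.
        (\<forall>n. dist (f (xs n)) (xs (Suc n)) < \<delta>) \<longrightarrow>
        (\<exists>x. \<forall>n. dist ((f ^^ n) x) (xs n) < \<epsilon>))"

end

theory Submission
  imports Defs
begin

text \<open>In an ultrametric space the relation \<open>dist a b < \<delta>\<close> is transitive. Hence if a map \<open>h\<close>
  does not expand distances below \<open>\<delta>\<close>, the \<open>h\<close>-orbit of the first point of a \<open>\<delta>\<close>-pseudo-orbit
  of \<open>h\<close> stays \<open>\<delta>\<close>-close to it. For (i) this is applied to \<open>f\<^sup>-\<^sup>1\<close> along the reversed initial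
  segments of a pseudo-orbit of \<open>f\<close>, producing points whose forward orbits shadow the first
  \<open>N\<close> steps; compactness of balls yields a limit point shadowing the whole pseudo-orbit.
  For (ii), an eventual similarity with ratio \<open>s \<le> 1\<close> is itself eventually nonexpanding, so
  pseudo-orbits are shadowed by the orbit of their initial point, while for \<open>s > 1\<close> the
  uniformly continuous inverse is eventually \<open>1/s\<close>-Lipschitz, which reduces (ii) to (i).\<close>

lemma ultrametric_dist_lt_trans:
  fixes x y z :: "'a::metric_space"
  assumes "ultrametric TYPE('a)" and "dist x y < e" and "dist y z < e"
  shows "dist x z < e"
  using assms unfolding ultrametric_def by (metis max_less_iff_conj le_less_trans)

lemma ultrametric_orbit_tracks_pseudo_orbit:
  fixes h :: "'a::metric_space \<Rightarrow> 'a"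
  assumes "ultrametric TYPE('a)" and "\<delta> > 0"
    and nonexp: "\<And>x y. dist x y < \<delta> \<Longrightarrow> dist (h x) (h y) \<le> dist x y"
    and pseudo: "\<And>k. k < n \<Longrightarrow> dist (h (ys k)) (ys (Suc k)) < \<delta>"
  shows "dist ((h ^^ n) (ys 0)) (ys n) < \<delta>"
  using pseudo
proof (induction n)
  case 0
  then show ?case using \<open>\<delta> > 0\<close> by simp
next
  case (Suc n)
  then have "dist ((h ^^ n) (ys 0)) (ys n) < \<delta>" by simp
  then have "dist (h ((h ^^ n) (ys 0))) (h (ys n)) < \<delta>"
    using nonexp by (meson le_less_trans)
  moreover have "dist (h (ys n)) (ys (Suc n)) < \<delta>" using Suc.prems by simp
  ultimately show ?case
    using ultrametric_dist_lt_trans[OF assms(1)] by simp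
qed

lemma shadowing_if_eventually_nonexpanding:
  fixes f :: "'a::metric_space \<Rightarrow> 'a"
  assumes "ultrametric TYPE('a)" and "eventually_lipschitz f 1"
  shows "shadowing f"
  unfolding shadowing_def
proof (intro allI impI)
  fix \<epsilon> :: real assume "\<epsilon> > 0"
  obtain \<eta> where "\<eta> > 0" and nonexp: "\<And>x y. dist x y < \<eta> \<Longrightarrow> dist (f x) (f y) \<le> dist x y"
    using assms(2) unfolding eventually_lipschitz_def by auto
  define \<delta> where "\<delta> = min \<epsilon> \<eta>"
  have "\<delta> > 0" using \<open>\<epsilon> > 0\<close> \<open>\<eta> > 0\<close> by (simp add: \<delta>_def)
  have "\<exists>x. \<forall>n. dist ((f ^^ n) x) (xs n) < \<epsilon>"
    if "\<forall>n. dist (f (xs n)) (xs (Suc n)) < \<delta>" for xs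
  proof (intro exI allI)
    fix n
    have "dist ((f ^^ n) (xs 0)) (xs n) < \<delta>"
      using ultrametric_orbit_tracks_pseudo_orbit[OF assms(1) \<open>\<delta> > 0\<close>] nonexp that
      by (simp add: \<delta>_def)
    then show "dist ((f ^^ n) (xs 0)) (xs n) < \<epsilon>" by (simp add: \<delta>_def)
  qed
  with \<open>\<delta> > 0\<close> show "\<exists>\<delta>>0. \<forall>xs. (\<forall>n. dist (f (xs n)) (xs (Suc n)) < \<delta>) \<longrightarrow>
      (\<exists>x. \<forall>n. dist ((f ^^ n) x) (xs n) < \<epsilon>)" by blast
qed

lemma continuous_on_funpow:
  fixes f :: "'a::topological_space \<Rightarrow> 'a"
  assumes "continuous_on UNIV f"
  shows "continuous_on UNIV (f ^^ n)"
proof (induction n)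
  case (Suc n)
  then show ?case
    using continuous_on_compose[of UNIV "f ^^ n" f] continuous_on_subset[OF assms] by simp
qed simp

lemma shadowing_point_if_finite_shadowing_points:
  fixes f :: "'a::metric_space \<Rightarrow> 'a"
  assumes "continuous_on UNIV f" and "compact K" and "\<And>N. z N \<in> K"
    and finite_shadow: "\<And>n N. n \<le> N \<Longrightarrow> dist ((f ^^ n) (z N)) (xs n) \<le> e"
  shows "\<exists>x. \<forall>n. dist ((f ^^ n) x) (xs n) \<le> e"
proof -
  obtain l \<sigma> where "strict_mono \<sigma>" and lim: "(z \<circ> \<sigma>) \<longlonglongrightarrow> l"
    using compact_imp_seq_compact[OF assms(2)] assms(3) unfolding seq_compact_def by metis
  have "dist ((f ^^ n) l) (xs n) \<le> e" for n
  proof (rule LIMSEQ_le_const2)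
    show "(\<lambda>k. dist ((f ^^ n) ((z \<circ> \<sigma>) k)) (xs n)) \<longlonglongrightarrow> dist ((f ^^ n) l) (xs n)"
      using continuous_on_tendsto_compose[OF continuous_on_funpow[OF assms(1)] lim]
      by (auto intro: tendsto_intros)
    have "dist ((f ^^ n) ((z \<circ> \<sigma>) k)) (xs n) \<le> e" if "k \<ge> n" for k
      using finite_shadow seq_suble[OF \<open>strict_mono \<sigma>\<close>, of k] that by simp
    then show "\<exists>N. \<forall>k\<ge>N. dist ((f ^^ n) ((z \<circ> \<sigma>) k)) (xs n) \<le> e" by blast
  qed
  then show ?thesis by blast
qed

lemma ultrametric_backward_orbit_shadows_initial_segment:
  fixes f :: "'a::metric_space \<Rightarrow> 'a"
  assumes "ultrametric TYPE('a)" and "bij f" and "\<delta> > 0"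
    and nonexp: "\<And>x y. dist x y < \<delta> \<Longrightarrow> dist (inv f x) (inv f y) \<le> dist x y"
    and pseudo: "\<And>n. dist (f (xs n)) (xs (Suc n)) < \<delta>"
    and "n \<le> N"
  shows "dist ((f ^^ n) ((inv f ^^ N) (xs N))) (xs n) < \<delta>"
proof -
  have reversed_pseudo: "dist (inv f (xs (N - k))) (xs (N - Suc k)) < \<delta>" if "k < N" for k
  proof -
    obtain m where m: "N - k = Suc m" "N - Suc k = m" using \<open>k < N\<close>
      by (metis Suc_diff_Suc diff_Suc_1)
    have "dist (xs (Suc m)) (f (xs m)) < \<delta>"
      using pseudo[of m] by (simp add: dist_commute)
    then have "dist (inv f (xs (Suc m))) (inv f (f (xs m))) < \<delta>"
      using nonexp by (meson le_less_trans)
    then show ?thesis using m \<open>bij f\<close> by (simp add: bij_is_inj)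
  qed
  have "dist ((inv f ^^ (N - n)) (xs N)) (xs n) < \<delta>"
    using ultrametric_orbit_tracks_pseudo_orbit[OF assms(1,3), of "inv f" "N - n" "\<lambda>k. xs (N - k)"]
      nonexp reversed_pseudo \<open>n \<le> N\<close> by simp
  moreover have "(inv f ^^ N) y = (inv f ^^ n) ((inv f ^^ (N - n)) y)" for y
    using funpow_add[of n "N - n" "inv f"] \<open>n \<le> N\<close> by simp
  then have "(f ^^ n) ((inv f ^^ N) (xs N)) = (inv f ^^ (N - n)) (xs N)"
    using fn_o_inv_fn_is_id[OF \<open>bij f\<close>, of n] by (simp add: fun_eq_iff)
  ultimately show ?thesis by simp
qed

lemma shadowing_if_inverse_eventually_nonexpanding:
  fixes f :: "'a::metric_space \<Rightarrow> 'a"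
  assumes "ultrametric TYPE('a)" and "r > 0" and "\<And>x::'a. compact (cball x r)"
    and "bij f" and "continuous_on UNIV f" and "eventually_lipschitz (inv f) 1"
  shows "shadowing f"
  unfolding shadowing_def
proof (intro allI impI)
  fix \<epsilon> :: real assume "\<epsilon> > 0"
  obtain \<eta> where "\<eta> > 0"
    and nonexp: "\<And>x y. dist x y < \<eta> \<Longrightarrow> dist (inv f x) (inv f y) \<le> dist x y"
    using assms(6) unfolding eventually_lipschitz_def by auto
  define \<delta> where "\<delta> = min (\<epsilon> / 2) (min \<eta> r)"
  have "\<delta> > 0" using \<open>\<epsilon> > 0\<close> \<open>\<eta> > 0\<close> \<open>r > 0\<close> by (simp add: \<delta>_def)
  have "\<exists>x. \<forall>n. dist ((f ^^ n) x) (xs n) < \<epsilon>"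
    if "\<forall>n. dist (f (xs n)) (xs (Suc n)) < \<delta>" for xs
  proof -
    define z where "z N = (inv f ^^ N) (xs N)" for N
    have "dist (inv f x) (inv f y) \<le> dist x y" if "dist x y < \<delta>" for x y
      using nonexp that by (simp add: \<delta>_def)
    then have finite_shadow: "dist ((f ^^ n) (z N)) (xs n) < \<delta>" if "n \<le> N" for n N
      using ultrametric_backward_orbit_shadows_initial_segment[OF assms(1,4) \<open>\<delta> > 0\<close>]
        that \<open>\<forall>n. dist (f (xs n)) (xs (Suc n)) < \<delta>\<close> by (simp add: z_def)
    have "z N \<in> cball (xs 0) r" for N
      using finite_shadow[of 0 N] by (simp add: \<delta>_def dist_commute)
    then obtain x where "\<forall>n. dist ((f ^^ n) x) (xs n) \<le> \<delta>"
      using shadowing_point_if_finite_shadowing_points[OF assms(5) assms(3), where e = \<delta>]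
        finite_shadow by (meson less_imp_le)
    moreover have "\<delta> < \<epsilon>" using \<open>\<epsilon> > 0\<close> by (simp add: \<delta>_def)
    ultimately show ?thesis by (meson le_less_trans)
  qed
  with \<open>\<delta> > 0\<close> show "\<exists>\<delta>>0. \<forall>xs. (\<forall>n. dist (f (xs n)) (xs (Suc n)) < \<delta>) \<longrightarrow>
      (\<exists>x. \<forall>n. dist ((f ^^ n) x) (xs n) < \<epsilon>)" by blast
qed

lemma eventually_lipschitz_mono:
  assumes "eventually_lipschitz g L" and "L \<le> M"
  shows "eventually_lipschitz g M"
proof -
  obtain \<epsilon> where "\<epsilon> > 0" and lip: "\<And>x y. dist x y < \<epsilon> \<Longrightarrow> dist (g x) (g y) \<le> L * dist x y"
    using assms(1) unfolding eventually_lipschitz_def by blast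
  have "dist (g x) (g y) \<le> M * dist x y" if "dist x y < \<epsilon>" for x y
    using lip[OF that] mult_right_mono[OF assms(2) zero_le_dist[of x y]] by linarith
  with \<open>\<epsilon> > 0\<close> show ?thesis
    unfolding eventually_lipschitz_def by blast
qed

lemma eventually_lipschitz_inv_if_eventual_similarity:
  fixes f :: "'a::metric_space \<Rightarrow> 'b::metric_space"
  assumes "bij f" and "uniformly_continuous_on UNIV (inv f)" and "\<epsilon> > 0" and "s > 0"
    and sim: "\<And>x y. dist x y < \<epsilon> \<Longrightarrow> dist (f x) (f y) = s * dist x y"
  shows "eventually_lipschitz (inv f) (1 / s)"
proof -
  obtain \<eta> where "\<eta> > 0" and small: "\<And>x y. dist x y < \<eta> \<Longrightarrow> dist (inv f x) (inv f y) < \<epsilon>"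
    using assms(2) \<open>\<epsilon> > 0\<close> unfolding uniformly_continuous_on_def by (metis UNIV_I)
  have "dist (inv f x) (inv f y) = 1 / s * dist x y" if "dist x y < \<eta>" for x y
  proof -
    have "dist x y = s * dist (inv f x) (inv f y)"
      using sim[OF small[OF that]] \<open>bij f\<close> by (simp add: bij_is_surj surj_f_inv_f)
    then show ?thesis using \<open>s > 0\<close> by simp
  qed
  with \<open>\<eta> > 0\<close> show ?thesis
    unfolding eventually_lipschitz_def by (metis order_refl)
qed

theorem corollary5p4:
  fixes f :: "'a::metric_space \<Rightarrow> 'a"
  assumes "ultrametric TYPE('a)"
    and "\<exists>\<epsilon>>0. \<forall>x::'a. compact (cball x \<epsilon>)"
    and "bij f"
    and "uniformly_continuous_on UNIV f"
  shows "(eventually_lipschitz (inv f) 1 \<longrightarrow> shadowing f)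
       \<and> (uniformly_continuous_on UNIV (inv f) \<and> eventual_similarity f \<longrightarrow> shadowing f)"
proof -
  obtain r where "r > 0" and "\<And>x::'a. compact (cball x r)" using assms(2) by blast
  have part_i: "shadowing f" if "eventually_lipschitz (inv f) 1"
    using shadowing_if_inverse_eventually_nonexpanding[OF assms(1) \<open>r > 0\<close>] assms(3,4) that
      \<open>\<And>x. compact (cball x r)\<close> uniformly_continuous_imp_continuous by blast
  moreover have "shadowing f"
    if "uniformly_continuous_on UNIV (inv f)" and "eventual_similarity f"
  proof -
    obtain \<epsilon> s where "\<epsilon> > 0" "s > 0"
      and sim: "\<And>x y. dist x y < \<epsilon> \<Longrightarrow> dist (f x) (f y) = s * dist x y"
      using \<open>eventual_similarity f\<close> unfolding eventual_similarity_def by auto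
    show ?thesis
    proof (cases "s \<le> 1")
      case True
      have "eventually_lipschitz f s"
        unfolding eventually_lipschitz_def using \<open>\<epsilon> > 0\<close> sim by auto
      then show ?thesis
        using eventually_lipschitz_mono True shadowing_if_eventually_nonexpanding[OF assms(1)] by blast
    next
      case False
      have "eventually_lipschitz (inv f) (1 / s)"
        using eventually_lipschitz_inv_if_eventual_similarity[OF assms(3) that(1) \<open>\<epsilon> > 0\<close> \<open>s > 0\<close> sim] .
      moreover have "1 / s \<le> 1" using False by simp
      ultimately show ?thesis
        using eventually_lipschitz_mono part_i by blast
    qed
  qed
  ultimately show ?thesis by blast
qed

end
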